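(* Let $j\in\mathbb{N}$ and $r\in\mathbb{N}_0$. Then for all $n\in\mathbb{N}$, \[c_j^{(r)}(n)=\sum_{i=0}^{j}(-1)^{j-i}\binom{j}{i} d_{i+r}(n).\]
   Context: $\mathbb{N}=\{1,2,\dots\}$, $\mathbb{N}_0=\mathbb{N}\cup\{0\}$. For $j,n\in\mathbb{N}$, $d_j(n)$ is the number of ordered $j$-tuples of positive integers with product $n$; $d_0(n)=1$ if $n=1$, $d_0(n)=0$ otherwise. $c_j(n)$ is the number of ordered $j$-tuples of integers each $\ge 2$ with product $n$. The associated divisor functions are defined recursively by $c_j^{(0)}=c_j$ and $c_j^{(r)}(n)=\sum_{m\mid n}c_j^{(r-1)}(m)$ for $r,n\in\mathbb{N}$. *)

theory Defs
  imports Main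
begin

text \<open>d j n: number of ordered j-tuples of positive integers with product n
  (for j = 0 this is 1 iff n = 1, as the empty product is 1).\<close>
definition divisor_d :: "nat \<Rightarrow> nat \<Rightarrow> nat" where
  "divisor_d j n = card {xs :: nat list. length xs = j \<and> (\<forall>x\<in>set xs. x \<ge> 1) \<and> prod_list xs = n}"

definition divisor_c :: "nat \<Rightarrow> nat \<Rightarrow> nat" where
  "divisor_c j n = card {xs :: nat list. length xs = j \<and> (\<forall>x\<in>set xs. x \<ge> 2) \<and> prod_list xs = n}"

fun assoc_c :: "nat \<Rightarrow> nat \<Rightarrow> nat \<Rightarrow> nat" where
  "assoc_c j 0 n = divisor_c j n"
| "assoc_c j (Suc r) n = (\<Sum>m | m dvd n. assoc_c j r m)"

end

theory Submission
  imports Defs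
begin

text \<open>Both c_j and d_j count factorizations of n into j ordered factors from a set P, so
  splitting off the first factor gives the recursion
  d_(k+1)(n) = \<Sum>_(m|n) d_k(m) and c_(k+1)(n) + c_k(n) = \<Sum>_(m|n) c_k(m), the second because the
  first factor n/m must avoid 1, i.e. m = n is excluded. The latter lifts to
  c_(j+1)^(r) + c_j^(r) = c_j^(r+1), i.e. c_(j+1)^(r) is the forward difference in r of c_j^(r),
  while c_0^(r) = d_r. Iterating the difference operator j times yields the alternating binomial
  sum.\<close>

definition ordered_factorizations :: "(nat \<Rightarrow> bool) \<Rightarrow> nat \<Rightarrow> nat \<Rightarrow> nat list set" where
  "ordered_factorizations P k n = {xs. length xs = k \<and> (\<forall>x\<in>set xs. P x) \<and> prod_list xs = n}"

lemma divisor_d_eq_card: "divisor_d k n = card (ordered_factorizations (\<lambda>x. x \<ge> 1) k n)"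
  by (simp add: divisor_d_def ordered_factorizations_def)

lemma divisor_c_eq_card: "divisor_c k n = card (ordered_factorizations (\<lambda>x. x \<ge> 2) k n)"
  by (simp add: divisor_c_def ordered_factorizations_def)

lemma finite_ordered_factorizations:
  assumes "n \<ge> 1"
  shows "finite (ordered_factorizations P k n)"
proof (rule finite_subset)
  show "ordered_factorizations P k n \<subseteq> {xs. set xs \<subseteq> {..n} \<and> length xs = k}"
    using assms by (auto simp: ordered_factorizations_def intro!: dvd_imp_le
        dest: prod_list_dvd[where 'a = nat])
  show "finite {xs. set xs \<subseteq> {..n} \<and> length xs = k}"
    by (rule finite_lists_length_eq) simp
qed

lemma ordered_factorizations_Suc:
  assumes "n \<ge> 1"
  shows "ordered_factorizations P (Suc k) n =
    (\<Union>m\<in>{m. m dvd n \<and> P (n div m)}. (#) (n div m) ` ordered_factorizations P k m)"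
proof (intro set_eqI iffI)
  fix xs assume "xs \<in> ordered_factorizations P (Suc k) n"
  then obtain x ys where xs: "xs = x # ys" and "P x"
    and ys: "ys \<in> ordered_factorizations P k (prod_list ys)" and n: "n = x * prod_list ys"
    by (cases xs) (auto simp: ordered_factorizations_def)
  from assms n have "prod_list ys \<noteq> 0" by auto
  with n have "n div prod_list ys = x" by simp
  with n \<open>P x\<close> xs ys show "xs \<in> (\<Union>m\<in>{m. m dvd n \<and> P (n div m)}.
      (#) (n div m) ` ordered_factorizations P k m)"
    by (intro UN_I[of "prod_list ys"]) auto
qed (auto simp: ordered_factorizations_def)

lemma card_ordered_factorizations_Suc:
  assumes "n \<ge> 1"
  shows "card (ordered_factorizations P (Suc k) n) =
    (\<Sum>m | m dvd n \<and> P (n div m). card (ordered_factorizations P k m))"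
proof -
  let ?I = "{m. m dvd n \<and> P (n div m)}"
  have divisors_pos: "m \<ge> 1" if "m \<in> ?I" for m
    using that assms by (cases m) auto
  have "finite ?I"
    using assms by (auto intro: finite_subset[OF _ finite_divisors_nat[of n]])
  then have "card (ordered_factorizations P (Suc k) n) =
      (\<Sum>m\<in>?I. card ((#) (n div m) ` ordered_factorizations P k m))"
    unfolding ordered_factorizations_Suc[OF assms]
  proof (rule card_UN_disjoint)
    show "\<forall>m\<in>?I. finite ((#) (n div m) ` ordered_factorizations P k m)"
      using divisors_pos finite_ordered_factorizations by blast
  qed (auto simp: ordered_factorizations_def)
  also have "\<dots> = (\<Sum>m\<in>?I. card (ordered_factorizations P k m))"
    by (intro sum.cong refl card_image) simp
  finally show ?thesis .
qed

lemma divisor_d_Suc: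
  assumes "n \<ge> 1"
  shows "divisor_d (Suc k) n = (\<Sum>m | m dvd n. divisor_d k m)"
proof -
  have "{m. m dvd n \<and> 1 \<le> n div m} = {m. m dvd n}"
    using assms by (auto elim!: dvdE)
  then show ?thesis
    using card_ordered_factorizations_Suc[OF assms, of "\<lambda>x. x \<ge> 1" k]
    by (simp add: divisor_d_eq_card)
qed

lemma divisor_c_Suc:
  assumes "n \<ge> 1"
  shows "divisor_c (Suc k) n + divisor_c k n = (\<Sum>m | m dvd n. divisor_c k m)"
proof -
  have "{m. m dvd n \<and> 2 \<le> n div m} = {m. m dvd n} - {n}"
    using assms by (auto elim!: dvdE simp: numeral_2_eq_2 not_less_eq_eq)
  moreover have "(\<Sum>m | m dvd n. divisor_c k m) =
      divisor_c k n + (\<Sum>m\<in>{m. m dvd n} - {n}. divisor_c k m)"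
    using assms by (intro sum.remove) auto
  ultimately show ?thesis
    using card_ordered_factorizations_Suc[OF assms, of "\<lambda>x. x \<ge> 2" k]
    by (simp add: divisor_c_eq_card)
qed

lemma divisor_c_0_eq_divisor_d_0: "divisor_c 0 n = divisor_d 0 n"
  unfolding divisor_c_def divisor_d_def by (rule arg_cong[where f = card]) auto

lemma assoc_c_0:
  "n \<ge> 1 \<Longrightarrow> assoc_c 0 r n = divisor_d r n"
proof (induction r arbitrary: n)
  case 0
  then show ?case by (simp add: divisor_c_0_eq_divisor_d_0)
next
  case (Suc r)
  have "assoc_c 0 (Suc r) n = (\<Sum>m | m dvd n. divisor_d r m)"
    using Suc by (auto intro!: sum.cong dest: dvd_pos_nat)
  with divisor_d_Suc[OF Suc.prems] show ?case by simp
qed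

lemma assoc_c_Suc_add:
  "n \<ge> 1 \<Longrightarrow> assoc_c (Suc j) r n + assoc_c j r n = assoc_c j (Suc r) n"
proof (induction r arbitrary: n)
  case 0
  then show ?case by (simp add: divisor_c_Suc)
next
  case (Suc r)
  have "assoc_c (Suc j) (Suc r) n + assoc_c j (Suc r) n =
      (\<Sum>m | m dvd n. assoc_c (Suc j) r m + assoc_c j r m)"
    by (simp add: sum.distrib)
  also have "\<dots> = (\<Sum>m | m dvd n. assoc_c j (Suc r) m)"
    using Suc by (auto intro!: sum.cong dest: dvd_pos_nat)
  finally show ?case by simp
qed

lemma alternating_binomial_sum_Suc:
  fixes f :: "nat \<Rightarrow> 'a :: comm_ring_1"
  shows "(\<Sum>i = 0..Suc j. (-1) ^ (Suc j - i) * of_nat (Suc j choose i) * f i) =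
    (\<Sum>i = 0..j. (-1) ^ (j - i) * of_nat (j choose i) * f (Suc i)) -
    (\<Sum>i = 0..j. (-1) ^ (j - i) * of_nat (j choose i) * f i)"
proof -
  have pascal: "of_nat (Suc j choose i) =
      of_nat (j choose i) + (if i = 0 then 0 else of_nat (j choose (i - 1)) :: 'a)" for i
    by (cases i) auto
  have lower: "(\<Sum>i = 0..Suc j. (-1) ^ (Suc j - i) * of_nat (j choose i) * f i) =
      - (\<Sum>i = 0..j. (-1) ^ (j - i) * of_nat (j choose i) * f i)"
    by (auto simp: sum.atLeast0_atMost_Suc sum_negf[symmetric] Suc_diff_le binomial_eq_0 intro!: sum.cong)
  have "(\<Sum>i = 0..Suc j. (-1) ^ (Suc j - i) * (if i = 0 then 0 else of_nat (j choose (i - 1))) * f i) =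
      (\<Sum>i = Suc 0..Suc j. (-1) ^ (Suc j - i) * (if i = 0 then 0 else of_nat (j choose (i - 1))) * f i)"
    by (simp add: sum.atLeast_Suc_atMost)
  also have "\<dots> = (\<Sum>i = 0..j. (-1) ^ (j - i) * of_nat (j choose i) * f (Suc i))"
    by (subst sum.shift_bounds_cl_Suc_ivl) simp
  finally have upper: "(\<Sum>i = 0..Suc j. (-1) ^ (Suc j - i) *
      (if i = 0 then 0 else of_nat (j choose (i - 1)) :: 'a) * f i) =
      (\<Sum>i = 0..j. (-1) ^ (j - i) * of_nat (j choose i) * f (Suc i))" .
  show ?thesis
    unfolding pascal distrib_left distrib_right sum.distrib lower upper by simp
qed

lemma assoc_c_eq_alternating_sum:
  assumes "n \<ge> 1"
  shows "int (assoc_c j r n) =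
    (\<Sum>i = 0..j. (-1) ^ (j - i) * int (j choose i) * int (divisor_d (i + r) n))"
proof (induction j arbitrary: r)
  case 0
  then show ?case using assoc_c_0[OF assms] by simp
next
  case (Suc j)
  have "int (assoc_c (Suc j) r n) = int (assoc_c j (Suc r) n) - int (assoc_c j r n)"
    using assoc_c_Suc_add[OF assms, of j r] by linarith
  also have "\<dots> = (\<Sum>i = 0..Suc j.
      (-1) ^ (Suc j - i) * int (Suc j choose i) * int (divisor_d (i + r) n))"
    unfolding Suc.IH alternating_binomial_sum_Suc by simp
  finally show ?case .
qed

theorem lemma11:
  fixes j r n :: nat
  assumes "j \<ge> 1" and "n \<ge> 1"
  shows "int (assoc_c j r n) =
    (\<Sum>i = 0..j. (-1) ^ (j - i) * int (j choose i) * int (divisor_d (i + r) n))"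
  using assoc_c_eq_alternating_sum[OF assms(2)] .

end
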